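(* Let $G$ be a compact graph in $\mathbb{R}^d$, $C$ a finite $\epsilon$-sample of $G$, $k\ge1$, and suppose $\psi:\mathrm{DS}_k(G)\to\mathrm{DS}_k(C)$ is a bijection of multisets with $\|q-\psi(q)\|_\infty\le\epsilon$ for all $q\in\mathrm{DS}_k(G)$. If $|\mathrm{vgap}_{k,l}(G)|-|\mathrm{vgap}_{k,l+1}(G)|>4\epsilon$ for some $l\ge1$, then $\psi$ restricts to a bijection $\mathrm{VS}_{k,l}(G)\to\mathrm{VS}_{k,l}(C)$.
   Context: Offsets $X^\alpha$: union of closed radius-$\alpha$ balls centred at points of $X$. $C$ is an $\epsilon$-sample of $G$ if $C\subseteq G^\epsilon$ and $G\subseteq C^\epsilon$. $\mathrm{PD}\{X^\alpha\}$: 1-dimensional $\mathbb{Z}_2$ persistence diagram of $\{X^\alpha\}$, dots $(x,y)=$(birth, death) with multiplicity; off-diagonal part finite. Diagonal gaps: with $0<a_1<\dots<a_n$ the distinct values of $y-x$ over off-diagonal dots and $a_0=0$, gaps are $\{a_{j-1}<y-x<a_j\}$, ranked by width with lower gaps winning ties; $\mathrm{DS}_k$ is the multiset of dots above the lowest of the $k$ widest gaps. Vertical gaps of $\mathrm{DS}_k$: with $c_1<\dots<c_r$ the distinct birth coordinates of dots in $\mathrm{DS}_k$, vertical gaps are $\{c_j<x<c_{j+1}\}$ of width $c_{j+1}-c_j$ and $\{x>c_r\}$ of width $+\infty$; ranked by width with the leftmost winning ties; $\mathrm{vgap}_{k,l}$ is the $l$-th widest (width $0$ if it does not exist). $\mathrm{VS}_{k,l}$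 is the multiset of dots of $\mathrm{DS}_k$ with $x\le a$, where $\{a<x<b\}$ is the leftmost of $\mathrm{vgap}_{k,1},\dots,\mathrm{vgap}_{k,l}$. Notation with argument $X$ refers to $\mathrm{PD}\{X^\alpha\}$; $\|\cdot\|_\infty$ is the max-coordinate distance on $\mathbb{R}^2$. *)

theory Defs
  imports "HOL-Analysis.Analysis" "HOL-Homology.Homology" "HOL-Library.Multiset"
          "HOL-Library.Extended_Real"
begin

definition offset :: "'a::euclidean_space set \<Rightarrow> real \<Rightarrow> 'a set" where
  "offset X \<alpha> = (\<Union>x\<in>X. cball x \<alpha>)"

definition eps_sample :: "'a::euclidean_space set \<Rightarrow> 'a set \<Rightarrow> real \<Rightarrow> bool" where
  "eps_sample C G \<epsilon> \<longleftrightarrow> C \<subseteq> offset G \<epsilon> \<and> G \<subseteq> offset C \<epsilon>"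

definition compact_graph :: "'a::euclidean_space set \<Rightarrow> bool" where
  "compact_graph G \<longleftrightarrow> (\<exists>V E. finite V \<and> finite E \<and>
     (\<forall>g\<in>E. arc g \<and> pathstart g \<in> V \<and> pathfinish g \<in> V \<and>
              path_image g \<inter> V = {pathstart g, pathfinish g}) \<and>
     (\<forall>g\<in>E. \<forall>h\<in>E. g \<noteq> h \<longrightarrow> path_image g \<inter> path_image h \<subseteq> V) \<and>
     G = V \<union> \<Union>(path_image ` E))"

text \<open>A Z_2 chain of p-simplices is a finite set of singular p-simplices; addition
  is symmetric difference.\<close>
definition z2_sum :: "'b set set \<Rightarrow> 'b set" where
  "z2_sum F = {s. odd (card {c\<in>F. s \<in> c})}"

definition z2_boundary :: "nat \<Rightarrow> ((nat \<Rightarrow> real) \<Rightarrow> 'a) set \<Rightarrow> ((nat \<Rightarrow> real) \<Rightarrow> 'a) set" where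
  "z2_boundary p c =
     {f. odd (card {(\<sigma>, i). \<sigma> \<in> c \<and> i \<le> p \<and> singular_face p i \<sigma> = f})}"

definition z2_cycles1 :: "'a topology \<Rightarrow> ((nat \<Rightarrow> real) \<Rightarrow> 'a) set set" where
  "z2_cycles1 X = {c. finite c \<and> c \<subseteq> singular_simplex_set 1 X \<and> z2_boundary 1 c = {}}"

definition z2_boundaries1 :: "'a topology \<Rightarrow> ((nat \<Rightarrow> real) \<Rightarrow> 'a) set set" where
  "z2_boundaries1 X = {z2_boundary 2 c | c. finite c \<and> c \<subseteq> singular_simplex_set 2 X}"

text \<open>Rank of the map H_1(S;Z_2) \<rightarrow> H_1(T;Z_2) induced by inclusion S \<subseteq> T:
  the maximal number of 1-cycles of S that are linearly independent modulo
  the 1-boundaries of T.\<close>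
definition h1_rank :: "'a::euclidean_space set \<Rightarrow> 'a set \<Rightarrow> enat" where
  "h1_rank S T = Sup {enat (card F) | F. finite F \<and> F \<subseteq> z2_cycles1 (top_of_set S) \<and>
       (\<forall>F'\<subseteq>F. F' \<noteq> {} \<longrightarrow> z2_sum F' \<notin> z2_boundaries1 (top_of_set T))}"

definition pers_rank :: "'a::euclidean_space set \<Rightarrow> real \<Rightarrow> real \<Rightarrow> int" where
  "pers_rank X a b = int (the_enat (h1_rank (offset X a) (offset X b)))"

text \<open>Multiplicity of the dot (x,y), x < y, in the 1-dimensional persistence diagram of
  the offset filtration: the eventual value of the rank-inclusion-exclusion over
  shrinking boxes around (x,y).\<close>
definition pd_mult :: "'a::euclidean_space set \<Rightarrow> real \<times> real \<Rightarrow> nat" where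
  "pd_mult X p = (THE m. eventually (\<lambda>\<delta>.
       pers_rank X (fst p + \<delta>) (snd p - \<delta>) - pers_rank X (fst p - \<delta>) (snd p - \<delta>)
     - pers_rank X (fst p + \<delta>) (snd p + \<delta>) + pers_rank X (fst p - \<delta>) (snd p + \<delta>) = int m)
     (at_right 0))"

definition PD :: "'a::euclidean_space set \<Rightarrow> (real \<times> real) multiset" where
  "PD X = (let P = {p. fst p < snd p \<and> pd_mult X p > 0} in
           if finite P then (\<Sum>p\<in>P. replicate_mset (pd_mult X p) p) else {#})"

definition diag_vals :: "(real \<times> real) multiset \<Rightarrow> real list" where
  "diag_vals D = sorted_list_of_set {snd p - fst p | p. p \<in># D \<and> fst p \<noteq> snd p}"

definition diag_a :: "(real \<times> real) multiset \<Rightarrow> nat \<Rightarrow> real" where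
  "diag_a D j = (if j = 0 then 0 else diag_vals D ! (j - 1))"

definition dgap_width :: "(real \<times> real) multiset \<Rightarrow> nat \<Rightarrow> real" where
  "dgap_width D j = diag_a D j - diag_a D (j - 1)"

definition dgap_beats :: "(real \<times> real) multiset \<Rightarrow> nat \<Rightarrow> nat \<Rightarrow> bool" where
  "dgap_beats D i j \<longleftrightarrow> dgap_width D i > dgap_width D j \<or>
                         (dgap_width D i = dgap_width D j \<and> i < j)"

definition dgap_top :: "(real \<times> real) multiset \<Rightarrow> nat \<Rightarrow> nat set" where
  "dgap_top D k = {j \<in> {1..length (diag_vals D)}.
      card {i \<in> {1..length (diag_vals D)}. dgap_beats D i j} < k}"

definition DS :: "nat \<Rightarrow> (real \<times> real) multiset \<Rightarrow> (real \<times> real) multiset" where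
  "DS k D = (if dgap_top D k = {} then {#}
             else filter_mset (\<lambda>p. snd p - fst p > diag_a D (Min (dgap_top D k) - 1)) D)"

definition births :: "(real \<times> real) multiset \<Rightarrow> real list" where
  "births E = sorted_list_of_set (fst ` set_mset E)"

definition vgap_w :: "(real \<times> real) multiset \<Rightarrow> nat \<Rightarrow> ereal" where
  "vgap_w E j = (if j < length (births E)
                 then ereal (births E ! j - births E ! (j - 1)) else \<infinity>)"

definition vgap_beats :: "(real \<times> real) multiset \<Rightarrow> nat \<Rightarrow> nat \<Rightarrow> bool" where
  "vgap_beats E i j \<longleftrightarrow> vgap_w E i > vgap_w E j \<or> (vgap_w E i = vgap_w E j \<and> i < j)"

text \<open>0-based rank of vertical gap j (gap j is {c_j < x < c_{j+1}}, j = 1..r)\<close>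
definition vgap_pos :: "(real \<times> real) multiset \<Rightarrow> nat \<Rightarrow> nat" where
  "vgap_pos E j = card {i \<in> {1..length (births E)}. vgap_beats E i j}"

text \<open>|vgap_{k,l}(D)|: width of the l-th widest vertical gap of DS_k(D), 0 if none\<close>
definition vgap_width :: "nat \<Rightarrow> nat \<Rightarrow> (real \<times> real) multiset \<Rightarrow> ereal" where
  "vgap_width k l D = (let E = DS k D in
     if \<exists>j\<in>{1..length (births E)}. vgap_pos E j = l - 1
     then vgap_w E (THE j. j \<in> {1..length (births E)} \<and> vgap_pos E j = l - 1) else 0)"

definition vgap_top :: "(real \<times> real) multiset \<Rightarrow> nat \<Rightarrow> nat set" where
  "vgap_top E l = {j \<in> {1..length (births E)}. vgap_pos E j < l}"

definition VS :: "nat \<Rightarrow> nat \<Rightarrow> (real \<times> real) multiset \<Rightarrow> (real \<times> real) multiset" where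
  "VS k l D = (let E = DS k D in
     if vgap_top E l = {} then {#}
     else filter_mset (\<lambda>p. fst p \<le> births E ! (Min (vgap_top E l) - 1)) E)"

definition dist_inf :: "real \<times> real \<Rightarrow> real \<times> real \<Rightarrow> real" where
  "dist_inf p q = max \<bar>fst p - fst q\<bar> \<bar>snd p - snd q\<bar>"

end

theory Submission
  imports Defs
begin

text \<open>Let \<tau> = |vgap_{k,l+1}(G)| + 2\<epsilon>. Then the l widest vertical gaps of DS_k(G) are exactly its
  gaps wider than \<tau>, and no gap of DS_k(G) has width in (\<tau> - 2\<epsilon>, \<tau> + 2\<epsilon>]. Births of
  matched dots differ by at most \<epsilon>, so thanks to this margin the left endpoints of the gaps
  wider than \<tau> in the two diagrams correspond one-to-one within \<epsilon>. Hence DS_k(C) also has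
  exactly l gaps wider than \<tau>, namely its l widest ones, and the leftmost of them starts within
  \<epsilon> of the leftmost one for G. Every birth to the right of such a start lies more than
  \<tau> \<ge> 2\<epsilon> beyond it, so matched dots fall on the same side of the two cut-offs.\<close>

section \<open>Ranking by decreasing weight\<close>

definition lex_beats :: "(nat \<Rightarrow> 'b::linorder) \<Rightarrow> nat \<Rightarrow> nat \<Rightarrow> bool" where
  "lex_beats w i j \<longleftrightarrow> w j < w i \<or> (w i = w j \<and> i < j)"

definition rank_in :: "nat set \<Rightarrow> (nat \<Rightarrow> 'b::linorder) \<Rightarrow> nat \<Rightarrow> nat" where
  "rank_in I w j = card {i\<in>I. lex_beats w i j}"

lemma rank_in_less:
  assumes "finite I" "i \<in> I" "lex_beats w i j"
  shows "rank_in I w i < rank_in I w j"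
proof -
  have "{x\<in>I. lex_beats w x i} \<subset> {x\<in>I. lex_beats w x j}"
    using assms(2,3) by (auto simp: lex_beats_def)
  then show ?thesis
    unfolding rank_in_def using assms(1) by (simp add: psubset_card_mono)
qed

lemma rank_in_less_iff:
  assumes "finite I" "i \<in> I" "j \<in> I"
  shows "rank_in I w i < rank_in I w j \<longleftrightarrow> lex_beats w i j"
proof
  assume less: "rank_in I w i < rank_in I w j"
  then have "i \<noteq> j" by auto
  then have "lex_beats w i j \<or> lex_beats w j i" by (auto simp: lex_beats_def)
  then show "lex_beats w i j" using rank_in_less[OF assms(1,3), of w i] less by auto
qed (rule rank_in_less[OF assms(1,2)])

lemma inj_on_rank_in:
  assumes "finite I" shows "inj_on (rank_in I w) I"
proof (rule inj_onI)
  fix i j assume "i \<in> I" "j \<in> I" "rank_in I w i = rank_in I w j"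
  then show "i = j"
    using rank_in_less_iff[OF assms, of i j w] rank_in_less_iff[OF assms, of j i w]
    by (auto simp: lex_beats_def)
qed

lemma rank_in_le_imp_le:
  assumes "finite I" "i \<in> I" "j \<in> I" "rank_in I w i \<le> rank_in I w j"
  shows "w j \<le> w i"
proof (cases "i = j")
  case False
  then have "rank_in I w i < rank_in I w j"
    using assms inj_on_rank_in[OF assms(1), of w] by (metis inj_onD le_neq_implies_less)
  then show ?thesis using rank_in_less_iff[OF assms(1-3), of w] by (auto simp: lex_beats_def)
qed simp

lemma rank_in_image:
  assumes "finite I" shows "rank_in I w ` I = {..<card I}"
proof -
  have "rank_in I w j < card I" if "j \<in> I" for j
  proof -
    have "{i\<in>I. lex_beats w i j} \<subset> I"
      using that by (auto simp: lex_beats_def)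
    then show ?thesis unfolding rank_in_def using assms by (simp add: psubset_card_mono)
  qed
  then have "rank_in I w ` I \<subseteq> {..<card I}" by auto
  moreover have "card (rank_in I w ` I) = card I"
    by (rule card_image[OF inj_on_rank_in[OF assms]])
  ultimately show ?thesis by (simp add: card_subset_eq)
qed

lemma card_rank_in_less:
  assumes "finite I" "l \<le> card I"
  shows "card {j\<in>I. rank_in I w j < l} = l"
proof -
  have "rank_in I w ` {j\<in>I. rank_in I w j < l} = {..<l}"
  proof
    show "{..<l} \<subseteq> rank_in I w ` {j\<in>I. rank_in I w j < l}"
    proof
      fix x assume "x \<in> {..<l}"
      moreover then have "x \<in> rank_in I w ` I"
        using rank_in_image[OF assms(1), of w] assms(2) by auto
      ultimately show "x \<in> rank_in I w ` {j\<in>I. rank_in I w j < l}" by auto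
    qed
  qed auto
  moreover have "inj_on (rank_in I w) {j\<in>I. rank_in I w j < l}"
    using inj_on_rank_in[OF assms(1)] by (rule inj_on_subset) auto
  ultimately show ?thesis by (metis card_image card_lessThan)
qed

lemma rank_in_less_eq_above:
  assumes "finite I" "card {j\<in>I. t < w j} = l"
  shows "{j\<in>I. rank_in I w j < l} = {j\<in>I. t < w j}"
proof -
  have above: "{j\<in>I. t < w j} \<subseteq> {j\<in>I. rank_in I w j < l}"
  proof safe
    fix j assume j: "j \<in> I" "t < w j"
    have "{i\<in>I. lex_beats w i j} \<subset> {j\<in>I. t < w j}"
      using j by (auto simp: lex_beats_def)
    then have "card {i\<in>I. lex_beats w i j} < card {j\<in>I. t < w j}"
      by (rule psubset_card_mono[rotated]) (simp add: assms(1))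
    then show "rank_in I w j < l" unfolding rank_in_def using assms(2) by simp
  qed
  have "card {j\<in>I. rank_in I w j < l} \<le> card {..<l}"
    by (rule card_inj_on_le[OF inj_on_subset[OF inj_on_rank_in[OF assms(1)]]]) auto
  moreover have "card {j\<in>I. t < w j} \<le> card {j\<in>I. rank_in I w j < l}"
    using above assms(1) by (simp add: card_mono)
  ultimately show ?thesis
    using card_subset_eq[OF _ above] assms by simp
qed

definition nth_widest :: "nat set \<Rightarrow> (nat \<Rightarrow> ereal) \<Rightarrow> nat \<Rightarrow> ereal" where
  "nth_widest I w m = (if \<exists>j\<in>I. rank_in I w j = m - 1
     then w (THE j. j \<in> I \<and> rank_in I w j = m - 1) else 0)"

lemma rank_in_downward_closed:
  assumes "finite I" "j \<in> I" "r \<le> rank_in I w j"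
  obtains j' where "j' \<in> I" "rank_in I w j' = r"
proof -
  have "rank_in I w j < card I" using rank_in_image[OF assms(1), of w] assms(2) by blast
  with assms(3) have "r \<in> rank_in I w ` I" unfolding rank_in_image[OF assms(1)] by simp
  then show ?thesis using that by blast
qed

lemma nth_widest_eq:
  assumes "finite I" "j \<in> I" "rank_in I w j = m - 1"
  shows "nth_widest I w m = w j"
proof -
  have "(THE j. j \<in> I \<and> rank_in I w j = m - 1) = j"
  proof (rule the_equality)
    fix j' assume "j' \<in> I \<and> rank_in I w j' = m - 1"
    then show "j' = j" using assms inj_onD[OF inj_on_rank_in[OF assms(1), of w], of j' j] by simp
  qed (use assms in simp)
  then show ?thesis using assms unfolding nth_widest_def by auto
qed

lemma nth_widest_attained:
  assumes "finite I" "nth_widest I w m \<noteq> 0"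
  obtains j where "j \<in> I" "rank_in I w j = m - 1" "nth_widest I w m = w j"
proof -
  have "\<exists>j\<in>I. rank_in I w j = m - 1"
    using assms(2) unfolding nth_widest_def by (rule contrapos_np) simp
  then obtain j where "j \<in> I" "rank_in I w j = m - 1" by blast
  with nth_widest_eq[OF assms(1)] show ?thesis using that by blast
qed

lemma nth_widest_nonneg:
  assumes "finite I" "\<forall>j\<in>I. 0 \<le> w j"
  shows "0 \<le> nth_widest I w m"
proof (cases "nth_widest I w m = 0")
  case False
  then obtain j where "j \<in> I" "nth_widest I w m = w j" by (rule nth_widest_attained[OF assms(1)])
  then show ?thesis using assms(2) by simp
qed simp

lemma nth_widest_le:
  assumes "finite I" "\<forall>j\<in>I. 0 \<le> w j" "j \<in> I" "rank_in I w j < m"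
  shows "nth_widest I w m \<le> w j"
proof (cases "nth_widest I w m = 0")
  case False
  then obtain j' where "j' \<in> I" "rank_in I w j' = m - 1" "nth_widest I w m = w j'"
    by (rule nth_widest_attained[OF assms(1)])
  then show ?thesis using rank_in_le_imp_le[OF assms(1,3), of j' w] assms(4) by simp
qed (use assms in simp)

lemma le_nth_widest:
  assumes "finite I" "j \<in> I" "m - 1 \<le> rank_in I w j"
  shows "w j \<le> nth_widest I w m"
proof -
  obtain j' where "j' \<in> I" "rank_in I w j' = m - 1"
    using rank_in_downward_closed[OF assms] .
  then show ?thesis
    using nth_widest_eq[OF assms(1), where w=w] rank_in_le_imp_le[OF assms(1) _ assms(2), where w=w]
      assms(3) by simp
qed

lemma nth_widest_Suc_neq_infinity:
  fixes w :: "nat \<Rightarrow> ereal"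
  assumes fin: "finite I" and inf_unique: "\<forall>i\<in>I. \<forall>j\<in>I. w i = \<infinity> \<longrightarrow> w j = \<infinity> \<longrightarrow> i = j"
    and "1 \<le> l"
  shows "nth_widest I w (l + 1) \<noteq> \<infinity>"
proof
  assume inf: "nth_widest I w (l + 1) = \<infinity>"
  then have "nth_widest I w (l + 1) \<noteq> 0" by simp
  then obtain j' where j': "j' \<in> I" "rank_in I w j' = l + 1 - 1" "nth_widest I w (l + 1) = w j'"
    by (rule nth_widest_attained[OF fin])
  then have inf_l: "nth_widest I w l = \<infinity>"
    using le_nth_widest[OF fin j'(1), where w=w and m=l] inf by simp
  then have "nth_widest I w l \<noteq> 0" by simp
  then obtain j where j: "j \<in> I" "rank_in I w j = l - 1" "nth_widest I w l = w j"
    by (rule nth_widest_attained[OF fin])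
  have "j = j'" using inf_unique j j' inf inf_l by simp
  with j(2) j'(2) \<open>1 \<le> l\<close> show False by simp
qed

lemma gap_threshold:
  fixes w :: "nat \<Rightarrow> ereal"
  assumes fin: "finite I" and pos: "\<forall>j\<in>I. 0 < w j"
    and inf_unique: "\<forall>i\<in>I. \<forall>j\<in>I. w i = \<infinity> \<longrightarrow> w j = \<infinity> \<longrightarrow> i = j"
    and l: "1 \<le> l" and \<epsilon>: "0 \<le> \<epsilon>"
    and gap: "nth_widest I w l - nth_widest I w (l + 1) > ereal (4 * \<epsilon>)"
  obtains \<tau> where "2 * \<epsilon> \<le> \<tau>" "card {j\<in>I. ereal \<tau> < w j} = l"
    "\<forall>j\<in>I. ereal (\<tau> - 2 * \<epsilon>) < w j \<longrightarrow> ereal (\<tau> + 2 * \<epsilon>) < w j"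
proof -
  let ?r = "rank_in I w" and ?W = "nth_widest I w"
  have nonneg: "\<forall>j\<in>I. 0 \<le> w j" using pos by (auto intro: less_imp_le)
  obtain W' where W': "?W (l + 1) = ereal W'" "0 \<le> W'"
    using nth_widest_nonneg[OF fin nonneg, of "l + 1"] nth_widest_Suc_neq_infinity[OF fin inf_unique l]
    by (cases "?W (l + 1)") auto
  define \<tau> where "\<tau> = W' + 2 * \<epsilon>"
  have widest_l: "ereal (\<tau> + 2 * \<epsilon>) < ?W l"
    using gap W'(1) unfolding \<tau>_def by (cases "?W l") (auto simp: algebra_simps)
  have above: "ereal (\<tau> + 2 * \<epsilon>) < w j" if "j \<in> I" "?r j < l" for j
    using widest_l nth_widest_le[OF fin nonneg that] by (rule less_le_trans)
  have below: "w j \<le> ereal (\<tau> - 2 * \<epsilon>)" if "j \<in> I" "\<not> ?r j < l" for j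
    using le_nth_widest[OF fin that(1), where w=w and m="l + 1"] that W'(1) unfolding \<tau>_def by simp
  have "ereal \<tau> < w j \<longleftrightarrow> ?r j < l" if "j \<in> I" for j
  proof
    assume "ereal \<tau> < w j"
    moreover have "ereal (\<tau> - 2 * \<epsilon>) \<le> ereal \<tau>" using \<epsilon> by simp
    ultimately show "?r j < l" using below[OF that] by (meson not_le order_trans)
  next
    assume "?r j < l"
    moreover have "ereal \<tau> \<le> ereal (\<tau> + 2 * \<epsilon>)" using \<epsilon> by simp
    ultimately show "ereal \<tau> < w j" using above[OF that] by (blast intro: le_less_trans)
  qed
  then have "{j\<in>I. ereal \<tau> < w j} = {j\<in>I. ?r j < l}" by auto
  moreover have "l \<le> card I"
  proof -
    have "?W l \<noteq> 0" using widest_l W'(2) \<epsilon> unfolding \<tau>_def by auto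
    then obtain jl where "jl \<in> I" "?r jl = l - 1" by (rule nth_widest_attained[OF fin])
    moreover have "?r jl < card I" using rank_in_image[OF fin, of w] \<open>jl \<in> I\<close> by blast
    ultimately show ?thesis using l by simp
  qed
  ultimately have "card {j\<in>I. ereal \<tau> < w j} = l" using card_rank_in_less[OF fin] by simp
  moreover have "\<forall>j\<in>I. ereal (\<tau> - 2 * \<epsilon>) < w j \<longrightarrow> ereal (\<tau> + 2 * \<epsilon>) < w j"
    using above below by (meson not_le)
  moreover have "2 * \<epsilon> \<le> \<tau>" using W'(2) unfolding \<tau>_def by simp
  ultimately show ?thesis using that by blast
qed

section \<open>Wide gaps of a finite set of reals\<close>

text \<open>Contains max S, the left endpoint of the unbounded gap.\<close>
definition wide_gap_starts :: "real set \<Rightarrow> real \<Rightarrow> real set" where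
  "wide_gap_starts S \<sigma> = {c\<in>S. \<forall>x\<in>S. c < x \<longrightarrow> c + \<sigma> < x}"

lemma wide_gap_starts_antimono:
  "\<sigma> \<le> \<sigma>' \<Longrightarrow> wide_gap_starts S \<sigma>' \<subseteq> wide_gap_starts S \<sigma>"
  unfolding wide_gap_starts_def by force

lemma finite_wide_gap_starts: "finite S \<Longrightarrow> finite (wide_gap_starts S \<sigma>)"
  unfolding wide_gap_starts_def by simp

lemma wide_gap_starts_eq_if_close:
  assumes "c \<in> wide_gap_starts S \<sigma>" "d \<in> wide_gap_starts S \<sigma>" "\<bar>c - d\<bar> \<le> \<sigma>"
  shows "c = d"
proof (rule ccontr)
  assume "c \<noteq> d"
  then have "c + \<sigma> < d \<or> d + \<sigma> < c"
    using assms(1,2) unfolding wide_gap_starts_def by (auto simp: neq_iff)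
  with assms(3) show False by linarith
qed

text \<open>Gap j of a sorted list cs lies between cs!(j-1) and cs!j, for j = 1..length cs; the last
  one is unbounded.\<close>
definition gap_width :: "real list \<Rightarrow> nat \<Rightarrow> ereal" where
  "gap_width cs j = (if j < length cs then ereal (cs ! j - cs ! (j - 1)) else \<infinity>)"

lemma strict_sorted_nth_less_iff:
  fixes cs :: "'a::linorder list"
  assumes "sorted_wrt (<) cs" "i < length cs" "j < length cs"
  shows "cs ! i < cs ! j \<longleftrightarrow> i < j"
  using sorted_wrt_nth_less[OF assms(1)] sorted_nth_mono[OF strict_sorted_imp_sorted[OF assms(1)]]
    assms(2,3) by (meson leD leI)

lemma gap_width_pos:
  assumes "sorted_wrt (<) cs" "j \<in> {1..length cs}"
  shows "0 < gap_width cs j"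
  using assms strict_sorted_nth_less_iff[OF assms(1), of "j - 1" j] unfolding gap_width_def by auto

lemma gap_width_gt_iff:
  assumes sorted: "sorted_wrt (<) cs" and j: "j \<in> {1..length cs}"
  shows "ereal \<sigma> < gap_width cs j \<longleftrightarrow> cs ! (j - 1) \<in> wide_gap_starts (set cs) \<sigma>"
proof -
  let ?c = "cs ! (j - 1)"
  have "j - 1 < length cs" using j by auto
  have above: "x \<in> set cs \<and> ?c < x \<longleftrightarrow> (\<exists>i. j \<le> i \<and> i < length cs \<and> x = cs ! i)" for x
  proof
    assume x: "x \<in> set cs \<and> ?c < x"
    then obtain i where i: "i < length cs" "x = cs ! i" by (auto simp: in_set_conv_nth)
    with x \<open>j - 1 < length cs\<close> have "j - 1 < i"
      using strict_sorted_nth_less_iff[OF sorted, of "j - 1" i] by simp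
    with i show "\<exists>i. j \<le> i \<and> i < length cs \<and> x = cs ! i" by (intro exI[of _ i]) simp
  next
    assume "\<exists>i. j \<le> i \<and> i < length cs \<and> x = cs ! i"
    then obtain i where "j \<le> i" "i < length cs" "x = cs ! i" by blast
    with j \<open>j - 1 < length cs\<close> show "x \<in> set cs \<and> ?c < x"
      using strict_sorted_nth_less_iff[OF sorted, of "j - 1" i] by auto
  qed
  have "?c \<in> set cs" using \<open>j - 1 < length cs\<close> by (rule nth_mem)
  moreover have "(\<forall>x\<in>set cs. ?c < x \<longrightarrow> ?c + \<sigma> < x) \<longleftrightarrow> (j < length cs \<longrightarrow> ?c + \<sigma> < cs ! j)"
  proof
    assume "\<forall>x\<in>set cs. ?c < x \<longrightarrow> ?c + \<sigma> < x"
    then show "j < length cs \<longrightarrow> ?c + \<sigma> < cs ! j" using above[of "cs ! j"] by blast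
  next
    assume next_gap: "j < length cs \<longrightarrow> ?c + \<sigma> < cs ! j"
    show "\<forall>x\<in>set cs. ?c < x \<longrightarrow> ?c + \<sigma> < x"
    proof (intro ballI impI)
      fix x assume "x \<in> set cs" "?c < x"
      then obtain i where i: "j \<le> i" "i < length cs" "x = cs ! i" using above by blast
      then have "cs ! j \<le> x" using sorted_nth_mono[OF strict_sorted_imp_sorted[OF sorted]] by simp
      moreover have "?c + \<sigma> < cs ! j" using next_gap i by simp
      ultimately show "?c + \<sigma> < x" by simp
    qed
  qed
  ultimately show ?thesis unfolding gap_width_def wide_gap_starts_def by auto
qed

lemma wide_gap_starts_eq_image:
  assumes "sorted_wrt (<) cs"
  shows "wide_gap_starts (set cs) \<sigma>
    = (\<lambda>j. cs ! (j - 1)) ` {j\<in>{1..length cs}. ereal \<sigma> < gap_width cs j}"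
proof -
  have "c \<in> (\<lambda>j. cs ! (j - 1)) ` {j\<in>{1..length cs}. ereal \<sigma> < gap_width cs j}"
    if c: "c \<in> wide_gap_starts (set cs) \<sigma>" for c
  proof -
    obtain i where "i < length cs" "c = cs ! i"
      using c unfolding wide_gap_starts_def by (auto simp: in_set_conv_nth)
    then show ?thesis
      using c gap_width_gt_iff[OF assms, of "Suc i"] by (intro image_eqI[of _ _ "Suc i"]) auto
  qed
  then show ?thesis using gap_width_gt_iff[OF assms] by auto
qed

lemma card_gap_width_gt:
  assumes "sorted_wrt (<) cs"
  shows "card {j\<in>{1..length cs}. ereal \<sigma> < gap_width cs j} = card (wide_gap_starts (set cs) \<sigma>)"
proof -
  have "inj_on (\<lambda>j. cs ! (j - 1)) {1..length cs}"
    using strict_sorted_iff[of cs] assms by (auto intro!: inj_onI simp: nth_eq_iff_index_eq)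
  then show ?thesis
    unfolding wide_gap_starts_eq_image[OF assms] by (intro card_image[symmetric]) (auto elim: inj_on_subset)
qed

lemma gap_start_Min:
  assumes sorted: "sorted_wrt (<) cs"
    and ne: "{j\<in>{1..length cs}. ereal \<sigma> < gap_width cs j} \<noteq> {}"
  shows "cs ! (Min {j\<in>{1..length cs}. ereal \<sigma> < gap_width cs j} - 1)
    = Min (wide_gap_starts (set cs) \<sigma>)"
proof -
  let ?J = "{j\<in>{1..length cs}. ereal \<sigma> < gap_width cs j}"
  have "Min ?J \<in> ?J" using ne by (intro Min_in) auto
  have "cs ! (Min ?J - 1) \<le> cs ! (j - 1)" if "j \<in> ?J" for j
  proof (rule sorted_nth_mono[OF strict_sorted_imp_sorted[OF sorted]])
    show "Min ?J - 1 \<le> j - 1" using that by (simp add: diff_le_mono)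
  qed (use that in auto)
  with \<open>Min ?J \<in> ?J\<close> show ?thesis
    unfolding wide_gap_starts_eq_image[OF sorted] by (intro Min_eqI[symmetric]) auto
qed

section \<open>Matching the wide gaps of two close sets\<close>

definition close_sets :: "real \<Rightarrow> real set \<Rightarrow> real set \<Rightarrow> bool" where
  "close_sets e S T \<longleftrightarrow> (\<forall>a\<in>S. \<exists>b\<in>T. \<bar>a - b\<bar> \<le> e) \<and> (\<forall>b\<in>T. \<exists>a\<in>S. \<bar>a - b\<bar> \<le> e)"

lemma close_sets_sym: "close_sets e S T \<longleftrightarrow> close_sets e T S"
  unfolding close_sets_def by (auto simp: abs_minus_commute)

lemma wide_gap_start_transfer:
  assumes "finite T" and close: "close_sets e S T" and c: "c \<in> wide_gap_starts S (\<sigma> + 2 * e)"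
  obtains d where "d \<in> wide_gap_starts T \<sigma>" "\<bar>c - d\<bar> \<le> e"
proof -
  from close c obtain b where b: "b \<in> T" "\<bar>c - b\<bar> \<le> e"
    unfolding close_sets_def wide_gap_starts_def by blast
  let ?B = "{t\<in>T. t \<le> c + e}"
  define d where "d = Max ?B"
  have fin: "finite ?B" using assms(1) by simp
  have "b \<in> ?B" using b by auto
  then have "d \<in> ?B" "b \<le> d" using Max_in[OF fin] Max_ge[OF fin] unfolding d_def by auto
  moreover have "d + \<sigma> < x" if x: "x \<in> T" "d < x" for x
  proof -
    have "c + e < x" using x Max_ge[OF fin] unfolding d_def by force
    moreover obtain a where "a \<in> S" "\<bar>a - x\<bar> \<le> e" using close x(1) unfolding close_sets_def by blast
    ultimately have "c + (\<sigma> + 2 * e) < a" using c unfolding wide_gap_starts_def by auto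
    with \<open>\<bar>a - x\<bar> \<le> e\<close> \<open>d \<in> ?B\<close> show ?thesis by auto
  qed
  ultimately show ?thesis using that b unfolding wide_gap_starts_def by force
qed

text \<open>The band hypothesis says that no gap of S has width in (\<tau> - 2e, \<tau> + 2e].\<close>
lemma wide_gap_starts_close:
  assumes "finite S" "finite T" and close: "close_sets e S T" and "0 \<le> e"
    and band: "wide_gap_starts S (\<tau> - 2 * e) \<subseteq> wide_gap_starts S (\<tau> + 2 * e)"
  shows "close_sets e (wide_gap_starts S \<tau>) (wide_gap_starts T \<tau>)"
proof -
  have band_eq: "wide_gap_starts S (\<tau> - 2 * e) = wide_gap_starts S \<tau>"
    "wide_gap_starts S (\<tau> + 2 * e) = wide_gap_starts S \<tau>"
    using band wide_gap_starts_antimono[of "\<tau> - 2 * e" \<tau> S]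
      wide_gap_starts_antimono[of \<tau> "\<tau> + 2 * e" S] \<open>0 \<le> e\<close> by auto
  have "\<exists>d\<in>wide_gap_starts T \<tau>. \<bar>c - d\<bar> \<le> e" if "c \<in> wide_gap_starts S \<tau>" for c
    by (rule wide_gap_start_transfer[OF assms(2) close, of c \<tau>]) (use that band_eq(2) in auto)
  moreover have "\<exists>c\<in>wide_gap_starts S \<tau>. \<bar>c - d\<bar> \<le> e" if "d \<in> wide_gap_starts T \<tau>" for d
  proof (rule wide_gap_start_transfer[OF assms(1) close_sets_sym[THEN iffD1, OF close], of d "\<tau> - 2 * e"])
    show "d \<in> wide_gap_starts T (\<tau> - 2 * e + 2 * e)" using that by simp
  qed (use band_eq(1) in \<open>auto simp: abs_minus_commute\<close>)
  ultimately show ?thesis unfolding close_sets_def by blast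
qed

lemma card_le_if_close_separated:
  fixes S T :: "real set"
  assumes "finite T" "\<forall>a\<in>S. \<exists>b\<in>T. \<bar>a - b\<bar> \<le> e"
    and separated: "\<forall>a\<in>S. \<forall>a'\<in>S. \<bar>a - a'\<bar> \<le> 2 * e \<longrightarrow> a = a'"
  shows "card S \<le> card T"
proof -
  obtain f where f: "\<forall>a\<in>S. f a \<in> T \<and> \<bar>a - f a\<bar> \<le> e" using assms(2) by metis
  have "inj_on f S"
  proof (rule inj_onI)
    fix a a' assume "a \<in> S" "a' \<in> S" "f a = f a'"
    then show "a = a'" using f separated by (smt (verit))
  qed
  then show ?thesis using f card_inj_on_le[OF _ _ assms(1)] by blast
qed

lemma close_separated_card_Min:
  fixes S T :: "real set"
  assumes "finite S" "finite T" "close_sets e S T"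
    and sepS: "\<forall>a\<in>S. \<forall>a'\<in>S. \<bar>a - a'\<bar> \<le> 2 * e \<longrightarrow> a = a'"
    and sepT: "\<forall>b\<in>T. \<forall>b'\<in>T. \<bar>b - b'\<bar> \<le> 2 * e \<longrightarrow> b = b'"
  shows "card S = card T" and "S \<noteq> {} \<Longrightarrow> \<bar>Min S - Min T\<bar> \<le> e"
proof -
  have ST: "\<forall>a\<in>S. \<exists>b\<in>T. \<bar>a - b\<bar> \<le> e" and TS: "\<forall>b\<in>T. \<exists>a\<in>S. \<bar>b - a\<bar> \<le> e"
    using assms(3) unfolding close_sets_def by (auto simp: abs_minus_commute)
  show "card S = card T"
    using card_le_if_close_separated[OF assms(2) ST sepS]
      card_le_if_close_separated[OF assms(1) TS sepT] by simp
  assume "S \<noteq> {}"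
  then have "T \<noteq> {}" using ST by blast
  obtain b where b: "b \<in> T" "\<bar>Min S - b\<bar> \<le> e" using ST Min_in[OF assms(1) \<open>S \<noteq> {}\<close>] by blast
  obtain a where a: "a \<in> S" "\<bar>Min T - a\<bar> \<le> e" using TS Min_in[OF assms(2) \<open>T \<noteq> {}\<close>] by blast
  have "Min S \<le> a" "Min T \<le> b" using a(1) b(1) assms(1,2) by simp_all
  then have "b = Min T"
    using sepT b a Min_in[OF assms(2) \<open>T \<noteq> {}\<close>] by (smt (verit))
  then show "\<bar>Min S - Min T\<bar> \<le> e" using b by simp
qed

text \<open>Points within e of two matched starts lie on the same side of them: any point of S
  right of \<alpha> is more than \<tau> \<ge> 2e to its right.\<close>
lemma le_gap_start_iff:
  assumes "a \<in> S" "b \<in> T" "\<bar>a - b\<bar> \<le> e"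
    and "\<alpha> \<in> wide_gap_starts S \<tau>" "\<beta> \<in> wide_gap_starts T \<tau>" "\<bar>\<alpha> - \<beta>\<bar> \<le> e" "2 * e \<le> \<tau>"
  shows "a \<le> \<alpha> \<longleftrightarrow> b \<le> \<beta>"
proof
  assume "a \<le> \<alpha>"
  show "b \<le> \<beta>"
  proof (rule ccontr)
    assume "\<not> b \<le> \<beta>"
    then have "\<beta> + \<tau> < b" using assms(2,5) unfolding wide_gap_starts_def by auto
    with assms \<open>a \<le> \<alpha>\<close> show False by linarith
  qed
next
  assume "b \<le> \<beta>"
  show "a \<le> \<alpha>"
  proof (rule ccontr)
    assume "\<not> a \<le> \<alpha>"
    then have "\<alpha> + \<tau> < a" using assms(1,4) unfolding wide_gap_starts_def by auto
    with assms \<open>b \<le> \<beta>\<close> show False by linarith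
  qed
qed

lemma wide_gap_cutoffs_agree:
  assumes fin: "finite S" "finite T" and close: "close_sets e S T" and "0 \<le> e" "2 * e \<le> \<tau>"
    and band: "wide_gap_starts S (\<tau> - 2 * e) \<subseteq> wide_gap_starts S (\<tau> + 2 * e)"
    and card: "card (wide_gap_starts S \<tau>) = l" "1 \<le> l"
  shows "card (wide_gap_starts T \<tau>) = l"
    and "a \<in> S \<Longrightarrow> b \<in> T \<Longrightarrow> \<bar>a - b\<bar> \<le> e \<Longrightarrow>
      a \<le> Min (wide_gap_starts S \<tau>) \<longleftrightarrow> b \<le> Min (wide_gap_starts T \<tau>)"
proof -
  let ?L = "wide_gap_starts S \<tau>" and ?M = "wide_gap_starts T \<tau>"
  have separated:
    "\<forall>c\<in>wide_gap_starts X \<tau>. \<forall>c'\<in>wide_gap_starts X \<tau>. \<bar>c - c'\<bar> \<le> 2 * e \<longrightarrow> c = c'" for X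
    using wide_gap_starts_eq_if_close \<open>2 * e \<le> \<tau>\<close> by force
  have finL: "finite ?L" and finM: "finite ?M" using fin by (simp_all add: finite_wide_gap_starts)
  note matched = close_separated_card_Min[OF finL finM
      wide_gap_starts_close[OF fin close \<open>0 \<le> e\<close> band] separated separated]
  show "card ?M = l" using matched(1) card(1) by simp
  have "?L \<noteq> {}" "?M \<noteq> {}" using card matched(1) by (auto intro!: notI)
  then have "Min ?L \<in> ?L" "Min ?M \<in> ?M" using finL finM by (simp_all add: Min_in)
  then show "a \<le> Min ?L \<longleftrightarrow> b \<le> Min ?M" if "a \<in> S" "b \<in> T" "\<bar>a - b\<bar> \<le> e"
    using le_gap_start_iff[OF that _ _ matched(2)[OF \<open>?L \<noteq> {}\<close>] \<open>2 * e \<le> \<tau>\<close>] by blast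
qed

section \<open>Vertical gaps and matchings of diagrams\<close>

lemma births_strict_sorted: "sorted_wrt (<) (births E)"
  unfolding births_def by simp

lemma set_births: "set (births E) = fst ` set_mset E"
  unfolding births_def by simp

lemma vgap_w_eq_gap_width: "vgap_w E = gap_width (births E)"
  unfolding vgap_w_def gap_width_def by auto

lemma vgap_pos_eq_rank_in: "vgap_pos E = rank_in {1..length (births E)} (vgap_w E)"
  unfolding vgap_pos_def vgap_beats_def rank_in_def lex_beats_def by auto

lemma vgap_width_eq_nth_widest:
  "vgap_width k l D = nth_widest {1..length (births (DS k D))} (vgap_w (DS k D)) l"
  unfolding vgap_width_def nth_widest_def vgap_pos_eq_rank_in Let_def ..

lemma vgap_width_threshold:
  fixes D :: "(real \<times> real) multiset" and k l :: nat
  defines "S \<equiv> fst ` set_mset (DS k D)"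
  assumes gap: "vgap_width k l D - vgap_width k (l + 1) D > ereal (4 * \<epsilon>)"
    and \<epsilon>: "0 \<le> \<epsilon>" and l: "1 \<le> l"
  obtains \<tau> where "2 * \<epsilon> \<le> \<tau>" "card (wide_gap_starts S \<tau>) = l"
    "wide_gap_starts S (\<tau> - 2 * \<epsilon>) \<subseteq> wide_gap_starts S (\<tau> + 2 * \<epsilon>)"
proof -
  let ?cs = "births (DS k D)"
  let ?I = "{1..length ?cs}"
  have "\<forall>j\<in>?I. 0 < gap_width ?cs j" using gap_width_pos[OF births_strict_sorted] by blast
  moreover have "\<forall>i\<in>?I. \<forall>j\<in>?I. gap_width ?cs i = \<infinity> \<longrightarrow> gap_width ?cs j = \<infinity> \<longrightarrow> i = j"
    unfolding gap_width_def by auto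
  moreover have "nth_widest ?I (gap_width ?cs) l - nth_widest ?I (gap_width ?cs) (l + 1)
      > ereal (4 * \<epsilon>)"
    using gap unfolding vgap_width_eq_nth_widest vgap_w_eq_gap_width .
  ultimately obtain \<tau> where \<tau>: "2 * \<epsilon> \<le> \<tau>" "card {j\<in>?I. ereal \<tau> < gap_width ?cs j} = l"
    and band: "\<forall>j\<in>?I. ereal (\<tau> - 2 * \<epsilon>) < gap_width ?cs j \<longrightarrow> ereal (\<tau> + 2 * \<epsilon>) < gap_width ?cs j"
    by (rule gap_threshold[OF finite_atLeastAtMost _ _ l \<epsilon>])
  show ?thesis
  proof (rule that[OF \<tau>(1)])
    show "card (wide_gap_starts S \<tau>) = l"
      using \<tau>(2) card_gap_width_gt[OF births_strict_sorted] unfolding S_def set_births by simp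
    show "wide_gap_starts S (\<tau> - 2 * \<epsilon>) \<subseteq> wide_gap_starts S (\<tau> + 2 * \<epsilon>)"
      using band unfolding S_def set_births[symmetric] wide_gap_starts_eq_image[OF births_strict_sorted]
      by auto
  qed
qed

lemma VS_eq_filter_le_Min:
  fixes D :: "(real \<times> real) multiset" and k l :: nat
  defines "S \<equiv> fst ` set_mset (DS k D)"
  assumes "card (wide_gap_starts S \<tau>) = l" "1 \<le> l"
  shows "VS k l D = filter_mset (\<lambda>p. fst p \<le> Min (wide_gap_starts S \<tau>)) (DS k D)"
proof -
  let ?cs = "births (DS k D)"
  let ?J = "{j\<in>{1..length ?cs}. ereal \<tau> < gap_width ?cs j}"
  have "card ?J = l"
    using assms(2) card_gap_width_gt[OF births_strict_sorted] unfolding S_def set_births by simp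
  then have top: "vgap_top (DS k D) l = ?J"
    unfolding vgap_top_def vgap_pos_eq_rank_in vgap_w_eq_gap_width
    by (rule rank_in_less_eq_above[OF finite_atLeastAtMost])
  have "?J \<noteq> {}"
  proof
    assume "?J = {}"
    then have "card ?J = 0" by (simp only: card.empty)
    with \<open>card ?J = l\<close> \<open>1 \<le> l\<close> show False by simp
  qed
  then have "?cs ! (Min ?J - 1) = Min (wide_gap_starts S \<tau>)"
    unfolding S_def set_births[symmetric] by (rule gap_start_Min[OF births_strict_sorted])
  then show ?thesis
    by (simp only: VS_def Let_def top if_not_P[OF \<open>?J \<noteq> {}\<close>])
qed

lemma VS_empty: "DS k D = {#} \<Longrightarrow> VS k l D = {#}"
  unfolding VS_def vgap_top_def births_def by simp

lemma abs_fst_le_dist_inf: "\<bar>fst p - fst q\<bar> \<le> dist_inf p q"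
  unfolding dist_inf_def by simp

lemma matched_pair_births:
  assumes "pq \<in># \<psi>" "\<forall>pq\<in>#\<psi>. dist_inf (fst pq) (snd pq) \<le> \<epsilon>"
  shows "fst (fst pq) \<in> fst ` set_mset (image_mset fst \<psi>)"
    and "fst (snd pq) \<in> fst ` set_mset (image_mset snd \<psi>)"
    and "\<bar>fst (fst pq) - fst (snd pq)\<bar> \<le> \<epsilon>"
proof -
  show "fst (fst pq) \<in> fst ` set_mset (image_mset fst \<psi>)"
    and "fst (snd pq) \<in> fst ` set_mset (image_mset snd \<psi>)"
    using assms(1) by simp_all
  show "\<bar>fst (fst pq) - fst (snd pq)\<bar> \<le> \<epsilon>"
    using abs_fst_le_dist_inf assms order_trans by blast
qed

lemma close_sets_births:
  assumes "\<forall>pq\<in>#\<psi>. dist_inf (fst pq) (snd pq) \<le> \<epsilon>"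
  shows "close_sets \<epsilon> (fst ` set_mset (image_mset fst \<psi>)) (fst ` set_mset (image_mset snd \<psi>))"
  unfolding close_sets_def
proof (intro conjI ballI)
  fix a assume "a \<in> fst ` set_mset (image_mset fst \<psi>)"
  then obtain pq where "pq \<in># \<psi>" "a = fst (fst pq)" by auto
  then show "\<exists>b\<in>fst ` set_mset (image_mset snd \<psi>). \<bar>a - b\<bar> \<le> \<epsilon>"
    using matched_pair_births[OF _ assms] by blast
next
  fix b assume "b \<in> fst ` set_mset (image_mset snd \<psi>)"
  then obtain pq where "pq \<in># \<psi>" "b = fst (snd pq)" by auto
  then show "\<exists>a\<in>fst ` set_mset (image_mset fst \<psi>). \<bar>a - b\<bar> \<le> \<epsilon>"
    using matched_pair_births[OF _ assms] by blast
qed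

lemma image_mset_filter_matched:
  fixes \<psi> :: "('a \<times> 'b) multiset"
  assumes "\<forall>pq\<in>#\<psi>. P (fst pq) \<longleftrightarrow> Q (snd pq)"
  defines "\<phi> \<equiv> filter_mset (\<lambda>pq. fst pq \<in># filter_mset P (image_mset fst \<psi>)) \<psi>"
  shows "image_mset fst \<phi> = filter_mset P (image_mset fst \<psi>)"
    and "image_mset snd \<phi> = filter_mset Q (image_mset snd \<psi>)"
proof -
  have by_fst: "\<phi> = filter_mset (\<lambda>pq. P (fst pq)) \<psi>"
    unfolding \<phi>_def by (rule filter_mset_cong) auto
  also have "\<dots> = filter_mset (\<lambda>pq. Q (snd pq)) \<psi>"
    by (rule filter_mset_cong) (use assms(1) in auto)
  finally have by_snd: "\<phi> = filter_mset (\<lambda>pq. Q (snd pq)) \<psi>" .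
  show "image_mset fst \<phi> = filter_mset P (image_mset fst \<psi>)"
    unfolding by_fst by (rule image_mset_filter_mset_swap)
  show "image_mset snd \<phi> = filter_mset Q (image_mset snd \<psi>)"
    unfolding by_snd by (rule image_mset_filter_mset_swap)
qed

theorem mainTheorem13:
  fixes G C :: "'a::euclidean_space set"
    and \<epsilon> :: real and k l :: nat
    and \<psi> :: "((real \<times> real) \<times> (real \<times> real)) multiset"
  assumes "compact_graph G"
    and "finite C" and "eps_sample C G \<epsilon>"
    and "k \<ge> 1"
    and "image_mset fst \<psi> = DS k (PD G)" and "image_mset snd \<psi> = DS k (PD C)"
    and "\<forall>pq\<in>#\<psi>. dist_inf (fst pq) (snd pq) \<le> \<epsilon>"
    and "l \<ge> 1"
    and "vgap_width k l (PD G) - vgap_width k (l + 1) (PD G) > ereal (4 * \<epsilon>)"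
  shows "image_mset fst (filter_mset (\<lambda>pq. fst pq \<in># VS k l (PD G)) \<psi>) = VS k l (PD G)
       \<and> image_mset snd (filter_mset (\<lambda>pq. fst pq \<in># VS k l (PD G)) \<psi>) = VS k l (PD C)"
proof (cases "\<psi> = {#}")
  case True
  then show ?thesis using assms(5,6) by (simp add: VS_empty)
next
  case False
  define S where "S = fst ` set_mset (DS k (PD G))"
  define T where "T = fst ` set_mset (DS k (PD C))"
  note births = matched_pair_births[OF _ assms(7), unfolded assms(5,6), folded S_def T_def]
  obtain pq0 where "pq0 \<in># \<psi>" using False by blast
  then have "0 \<le> \<epsilon>" using births(3) abs_ge_zero order_trans by blast
  obtain \<tau> where \<tau>: "2 * \<epsilon> \<le> \<tau>" "card (wide_gap_starts S \<tau>) = l"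
    and band: "wide_gap_starts S (\<tau> - 2 * \<epsilon>) \<subseteq> wide_gap_starts S (\<tau> + 2 * \<epsilon>)"
    using vgap_width_threshold[OF assms(9) \<open>0 \<le> \<epsilon>\<close> assms(8)] unfolding S_def by blast
  have fin: "finite S" "finite T" unfolding S_def T_def by simp_all
  have close: "close_sets \<epsilon> S T"
    using close_sets_births[OF assms(7)] unfolding assms(5,6) S_def T_def .
  note cutoffs = wide_gap_cutoffs_agree[OF fin close \<open>0 \<le> \<epsilon>\<close> \<tau>(1) band \<tau>(2) assms(8)]
  define \<alpha> where "\<alpha> = Min (wide_gap_starts S \<tau>)"
  define \<beta> where "\<beta> = Min (wide_gap_starts T \<tau>)"
  have "\<forall>pq\<in>#\<psi>. fst (fst pq) \<le> \<alpha> \<longleftrightarrow> fst (snd pq) \<le> \<beta>"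
    unfolding \<alpha>_def \<beta>_def using cutoffs(2) births by blast
  moreover have "VS k l (PD G) = filter_mset (\<lambda>p. fst p \<le> \<alpha>) (DS k (PD G))"
    using VS_eq_filter_le_Min[OF \<tau>(2)[unfolded S_def] assms(8)] unfolding \<alpha>_def S_def .
  moreover have "VS k l (PD C) = filter_mset (\<lambda>p. fst p \<le> \<beta>) (DS k (PD C))"
    using VS_eq_filter_le_Min[OF cutoffs(1)[unfolded T_def] assms(8)] unfolding \<beta>_def T_def .
  ultimately show ?thesis
    using image_mset_filter_matched[of \<psi> "\<lambda>p. fst p \<le> \<alpha>" "\<lambda>p. fst p \<le> \<beta>"] assms(5,6) by simp
qed

end
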